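(* Let $\lambda>0$ and let $h$ be any left-invariant metric on $G$. Then: (1) the unique inverse-linear path from $h_0$ to $h$ is nonnegative if and only if the unique inverse-linear path from $\lambda h_0$ to $h$ is nonnegative; (2) the unique inverse-linear path from $h_0$ to $h$ is locally nonnegative if and only if the unique inverse-linear path from $\lambda h_0$ to $h$ is locally nonnegative; (3) the unique inverse-linear path from $h_0$ to $h$ is infinitesimally nonnegative if and only if the unique inverse-linear path from $\lambda h_0$ to $h$ is infinitesimally nonnegative.
   Context: $G$ is a compact Lie group with Lie algebra $\mathfrak g$ and bi-invariant metric $h_0$. For a bi-invariant metric $b$ and a left-invariant metric $h$, let $\Phi$ be the $b$-self-adjoint positive definite endomorphism of $\mathfrak g$ with $h(X,Y)=b(\Phi X,Y)$. The unique inverse-linear path from $b$ to $h$ is $\Phi_t=(I-t\Psi)^{-1}$ with $\Psi=I-\Phi^{-1}$, giving left-invariant metrics $h_t(X,Y)=b(\Phi_tX,Y)$ with $h_0$-path starting at $b$ ($t=0$) and ending at $h$ ($t=1$). The unnormalized sectional curvature is $k_h(Z_1,Z_2)=h(R_h(Z_1,Z_2)Z_2,Z_1)$ and for fixed $X,Y\in\mathfrak g$, $\kappa(t)=k_{h_t}(\Phi_t^{-1}X,\Phi_t^{-1}Y)$. The path is nonnegative if $h_t$ has nonnegative sectional curvature for all $0\le t\le1$; infinitesimally nonnegative if for every $X,Y\in\mathfrak g$ there is $\varepsilon>0$ with $\kappa(t)\ge0$ for $t\in[0,\varepsilon)$; locally nonnegative if one $\varepsilon>0$ works for all pairs $X,Y$.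 *)

theory Defs
  imports "HOL-Analysis.Analysis"
begin

text \<open>The Lie algebra g of the compact Lie group G is modelled as a finite-dimensional
real inner product space 'a (euclidean_space), whose inner product is the bi-invariant
metric h0, together with a Lie bracket br which is ad-invariant w.r.t. h0.\<close>

definition compact_lie_algebra :: "('a::euclidean_space \<Rightarrow> 'a \<Rightarrow> 'a) \<Rightarrow> bool" where
  "compact_lie_algebra br \<longleftrightarrow>
     bilinear br \<and>
     (\<forall>X Y. br X Y = - br Y X) \<and>
     (\<forall>X Y Z. br X (br Y Z) + br Y (br Z X) + br Z (br X Y) = 0) \<and>
     (\<forall>X Y Z. inner (br X Y) Z + inner Y (br X Z) = 0)"

definition left_inv_metric :: "('a::euclidean_space \<Rightarrow> 'a \<Rightarrow> real) \<Rightarrow> bool" where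
  "left_inv_metric h \<longleftrightarrow> bilinear h \<and> (\<forall>X Y. h X Y = h Y X) \<and> (\<forall>X. X \<noteq> 0 \<longrightarrow> h X X > 0)"

text \<open>Levi-Civita connection of a left-invariant metric on left-invariant fields (Koszul formula).\<close>
definition lc_nabla :: "('a::euclidean_space \<Rightarrow> 'a \<Rightarrow> 'a) \<Rightarrow> ('a \<Rightarrow> 'a \<Rightarrow> real) \<Rightarrow> 'a \<Rightarrow> 'a \<Rightarrow> 'a" where
  "lc_nabla br g X Y = (THE V. \<forall>Z. 2 * g V Z = g (br X Y) Z - g (br Y Z) X + g (br Z X) Y)"

definition curv :: "('a::euclidean_space \<Rightarrow> 'a \<Rightarrow> 'a) \<Rightarrow> ('a \<Rightarrow> 'a \<Rightarrow> real) \<Rightarrow> 'a \<Rightarrow> 'a \<Rightarrow> 'a \<Rightarrow> 'a" where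
  "curv br g X Y Z = lc_nabla br g X (lc_nabla br g Y Z) - lc_nabla br g Y (lc_nabla br g X Z)
                     - lc_nabla br g (br X Y) Z"

text \<open>Unnormalized sectional curvature k_h(Z1,Z2) = h(R_h(Z1,Z2)Z2, Z1).\<close>
definition sec_k :: "('a::euclidean_space \<Rightarrow> 'a \<Rightarrow> 'a) \<Rightarrow> ('a \<Rightarrow> 'a \<Rightarrow> real) \<Rightarrow> 'a \<Rightarrow> 'a \<Rightarrow> real" where
  "sec_k br g Z1 Z2 = g (curv br g Z1 Z2 Z2) Z1"

definition endo_of :: "('a::euclidean_space \<Rightarrow> 'a \<Rightarrow> real) \<Rightarrow> ('a \<Rightarrow> 'a \<Rightarrow> real) \<Rightarrow> 'a \<Rightarrow> 'a" where
  "endo_of b h = (THE \<Phi>. linear \<Phi> \<and> (\<forall>X Y. b (\<Phi> X) Y = h X Y))"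

definition path_Phi :: "('a::euclidean_space \<Rightarrow> 'a \<Rightarrow> real) \<Rightarrow> ('a \<Rightarrow> 'a \<Rightarrow> real) \<Rightarrow> real \<Rightarrow> 'a \<Rightarrow> 'a" where
  "path_Phi b h t = inv (\<lambda>X. X - t *\<^sub>R (X - inv (endo_of b h) X))"

definition path_metric :: "('a::euclidean_space \<Rightarrow> 'a \<Rightarrow> real) \<Rightarrow> ('a \<Rightarrow> 'a \<Rightarrow> real) \<Rightarrow> real \<Rightarrow> 'a \<Rightarrow> 'a \<Rightarrow> real" where
  "path_metric b h t X Y = b (path_Phi b h t X) Y"

definition path_kappa :: "('a::euclidean_space \<Rightarrow> 'a \<Rightarrow> 'a) \<Rightarrow> ('a \<Rightarrow> 'a \<Rightarrow> real) \<Rightarrow> ('a \<Rightarrow> 'a \<Rightarrow> real) \<Rightarrow> 'a \<Rightarrow> 'a \<Rightarrow> real \<Rightarrow> real" where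
  "path_kappa br b h X Y t =
     sec_k br (path_metric b h t) (inv (path_Phi b h t) X) (inv (path_Phi b h t) Y)"

definition path_nonneg :: "('a::euclidean_space \<Rightarrow> 'a \<Rightarrow> 'a) \<Rightarrow> ('a \<Rightarrow> 'a \<Rightarrow> real) \<Rightarrow> ('a \<Rightarrow> 'a \<Rightarrow> real) \<Rightarrow> bool" where
  "path_nonneg br b h \<longleftrightarrow> (\<forall>t. 0 \<le> t \<and> t \<le> 1 \<longrightarrow> (\<forall>Z1 Z2. sec_k br (path_metric b h t) Z1 Z2 \<ge> 0))"

definition path_inf_nonneg :: "('a::euclidean_space \<Rightarrow> 'a \<Rightarrow> 'a) \<Rightarrow> ('a \<Rightarrow> 'a \<Rightarrow> real) \<Rightarrow> ('a \<Rightarrow> 'a \<Rightarrow> real) \<Rightarrow> bool" where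
  "path_inf_nonneg br b h \<longleftrightarrow>
     (\<forall>X Y. \<exists>\<epsilon>>0. \<forall>t. 0 \<le> t \<and> t < \<epsilon> \<longrightarrow> path_kappa br b h X Y t \<ge> 0)"

definition path_loc_nonneg :: "('a::euclidean_space \<Rightarrow> 'a \<Rightarrow> 'a) \<Rightarrow> ('a \<Rightarrow> 'a \<Rightarrow> real) \<Rightarrow> ('a \<Rightarrow> 'a \<Rightarrow> real) \<Rightarrow> bool" where
  "path_loc_nonneg br b h \<longleftrightarrow>
     (\<exists>\<epsilon>>0. \<forall>X Y. \<forall>t. 0 \<le> t \<and> t < \<epsilon> \<longrightarrow> path_kappa br b h X Y t \<ge> 0)"

end

theory Submission
  imports Defs
begin

(* For b = lam h0 one has inv (endo_of b h) = lam P, where P is the inverse of the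
   h0-representative of h. Hence I - t Psi = (1 - t) I + lam t P = D ((1 - s) I + s P) with
   D = 1 - t + lam t and s = reparam lam t = lam t / D: the path from lam h0 at time t is the
   path from h0 at time s, with the metric scaled by lam / D. Sectional curvature is invariant
   under such a homothety and homogeneous of degree 4 in its arguments, so kappa at t equals
   lam D^3 times kappa at s for the path from h0. The time change t |-> s is a continuous
   bijection of [0,1] fixing 0, with inverse the time change for 1 / lam, so all three
   nonnegativity notions transfer. *)

definition reparam :: "real \<Rightarrow> real \<Rightarrow> real" where
  "reparam c t = c * t / (1 - t + c * t)"

lemma reparam_denom_pos:
  fixes c t :: real
  assumes "c > 0" "0 \<le> t" "t \<le> 1"
  shows "1 - t + c * t > 0"
proof -
  from assms have "0 \<le> c * t" "t = 0 \<or> 0 < c * t" by (auto simp: zero_less_mult_iff)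
  then show ?thesis using assms(3) by linarith
qed

lemma reparam_bounds:
  assumes "c > 0" "0 \<le> t" "t \<le> 1"
  shows "0 \<le> reparam c t" "reparam c t \<le> 1"
  using reparam_denom_pos[OF assms] assms by (auto simp: reparam_def divide_le_eq_1)

lemma reparam_reparam_inverse:
  assumes "c > 0" "0 \<le> t" "t \<le> 1"
  shows "reparam c (reparam (1 / c) t) = t"
proof -
  define d where "d = c - c * t + t"
  have "c * (1 - t + (1 / c) * t) > 0"
    using reparam_denom_pos[of "1 / c" t] assms by simp
  then have "d > 0" using assms(1) by (simp add: d_def algebra_simps)
  define u where "u = t / d"
  have u: "reparam (1 / c) t = u"
    using assms(1) \<open>d > 0\<close> by (simp add: reparam_def u_def d_def field_simps)
  have "1 - u + c * u = (d - t + c * t) / d"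
    using \<open>d > 0\<close> by (simp add: u_def field_simps)
  also have "d - t + c * t = c" by (simp add: d_def)
  finally have "reparam c u = c * u / (c / d)" by (simp add: reparam_def)
  also have "\<dots> = t" using assms(1) \<open>d > 0\<close> by (simp add: u_def)
  finally show ?thesis unfolding u .
qed

lemma reparam_all_iff:
  assumes "c > 0" and QR: "\<And>t. 0 \<le> t \<Longrightarrow> t \<le> 1 \<Longrightarrow> Q' t \<longleftrightarrow> Q (reparam c t)"
  shows "(\<forall>t. 0 \<le> t \<and> t \<le> 1 \<longrightarrow> Q' t) \<longleftrightarrow> (\<forall>s. 0 \<le> s \<and> s \<le> 1 \<longrightarrow> Q s)"
proof
  assume Q': "\<forall>t. 0 \<le> t \<and> t \<le> 1 \<longrightarrow> Q' t"
  show "\<forall>s. 0 \<le> s \<and> s \<le> 1 \<longrightarrow> Q s"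
  proof (intro allI impI)
    fix s :: real assume s: "0 \<le> s \<and> s \<le> 1"
    have "1 / c > 0" using assms(1) by simp
    then have "0 \<le> reparam (1 / c) s" "reparam (1 / c) s \<le> 1"
      using reparam_bounds s by auto
    then show "Q s" using Q' QR reparam_reparam_inverse[OF assms(1)] s by metis
  qed
qed (use QR reparam_bounds[OF assms(1)] in blast)

definition holds_initially :: "(real \<Rightarrow> bool) \<Rightarrow> bool" where
  "holds_initially Q \<longleftrightarrow> (\<exists>\<epsilon>>0. \<forall>t. 0 \<le> t \<and> t < \<epsilon> \<longrightarrow> Q t)"

lemma holds_initially_reparam:
  assumes "c > 0" and QR: "\<And>t. 0 \<le> t \<Longrightarrow> t \<le> 1 \<Longrightarrow> Q' t \<longleftrightarrow> Q (reparam c t)"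
    and "holds_initially Q"
  shows "holds_initially Q'"
proof -
  obtain \<epsilon> where "\<epsilon> > 0" and Q: "\<And>s. 0 \<le> s \<Longrightarrow> s < \<epsilon> \<Longrightarrow> Q s"
    using assms(3) unfolding holds_initially_def by blast
  have "continuous (at 0) (reparam c)"
    unfolding reparam_def by (intro continuous_intros) simp
  moreover have "reparam c 0 = 0" by (simp add: reparam_def)
  ultimately obtain \<delta> where "\<delta> > 0" and \<delta>: "\<And>t. \<bar>t\<bar> < \<delta> \<Longrightarrow> \<bar>reparam c t\<bar> < \<epsilon>"
    using \<open>\<epsilon> > 0\<close> unfolding continuous_at_eps_delta dist_real_def by (metis diff_zero)
  have "Q' t" if t: "0 \<le> t" "t < min \<delta> 1" for t
  proof -
    have "0 \<le> reparam c t" using reparam_bounds[OF assms(1)] t by simp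
    moreover have "reparam c t < \<epsilon>" using \<delta>[of t] t by simp
    ultimately show ?thesis using QR[of t] Q t by simp
  qed
  moreover have "min \<delta> 1 > 0" using \<open>\<delta> > 0\<close> by simp
  ultimately show ?thesis unfolding holds_initially_def by blast
qed

lemma holds_initially_reparam_iff:
  assumes "c > 0" and QR: "\<And>t. 0 \<le> t \<Longrightarrow> t \<le> 1 \<Longrightarrow> Q' t \<longleftrightarrow> Q (reparam c t)"
  shows "holds_initially Q' \<longleftrightarrow> holds_initially Q"
proof
  have "1 / c > 0" using assms(1) by simp
  have QR': "Q s \<longleftrightarrow> Q' (reparam (1 / c) s)" if "0 \<le> s" "s \<le> 1" for s
    using QR[of "reparam (1 / c) s"] reparam_bounds[OF \<open>1 / c > 0\<close> that]
      reparam_reparam_inverse[OF assms(1) that] by simp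
  show "holds_initially Q" if "holds_initially Q'"
    by (rule holds_initially_reparam[OF \<open>1 / c > 0\<close> QR' that])
qed (rule holds_initially_reparam[where Q' = Q' and Q = Q, OF assms])

definition posdef_operator :: "('a::euclidean_space \<Rightarrow> 'a) \<Rightarrow> bool" where
  "posdef_operator A \<longleftrightarrow>
     linear A \<and> (\<forall>X Y. inner (A X) Y = inner X (A Y)) \<and> (\<forall>X. X \<noteq> 0 \<longrightarrow> inner (A X) X > 0)"

lemma posdef_operator_bij:
  assumes "posdef_operator A"
  shows "bij A"
proof -
  have lin: "linear A" and pos: "\<And>X. X \<noteq> 0 \<Longrightarrow> inner (A X) X > 0"
    using assms unfolding posdef_operator_def by auto
  have "inj A"
  proof (rule injI)
    fix X Y assume "A X = A Y"
    then have "A (X - Y) = 0" using lin by (simp add: linear_diff)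
    then show "X = Y" using pos[of "X - Y"] by auto
  qed
  then show ?thesis using lin by (simp add: bij_def eucl.linear_inj_imp_surj)
qed

lemma posdef_operator_inv:
  assumes "posdef_operator A"
  shows "posdef_operator (inv A)"
proof -
  have lin: "linear A" and sym: "\<And>X Y. inner (A X) Y = inner X (A Y)"
    and pos: "\<And>X. X \<noteq> 0 \<Longrightarrow> inner (A X) X > 0"
    using assms unfolding posdef_operator_def by auto
  have bij: "bij A" by (rule posdef_operator_bij[OF assms])
  have A_inv: "A (inv A X) = X" for X using bij by (simp add: bij_is_surj surj_f_inv_f)
  have "linear (inv A)" using lin bij by (simp add: bij_is_inj eucl.inj_linear_imp_inv_linear)
  moreover have "inner (inv A X) Y = inner X (inv A Y)" for X Y
    using sym[of "inv A X" "inv A Y"] by (simp add: A_inv)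
  moreover have "inner (inv A X) X > 0" if "X \<noteq> 0" for X
  proof -
    have "inv A X \<noteq> 0" using that A_inv[of X] linear_0[OF lin] by auto
    then show ?thesis using pos[of "inv A X"] by (simp add: A_inv inner_commute)
  qed
  ultimately show ?thesis unfolding posdef_operator_def by blast
qed

lemma posdef_operator_convex:
  assumes "posdef_operator A" "0 \<le> u" "u \<le> 1"
  shows "posdef_operator (\<lambda>X. X - u *\<^sub>R (X - A X))"
proof -
  have lin: "linear A" and sym: "\<And>X Y. inner (A X) Y = inner X (A Y)"
    and pos: "\<And>X. X \<noteq> 0 \<Longrightarrow> inner (A X) X > 0"
    using assms(1) unfolding posdef_operator_def by auto
  have "linear (\<lambda>X. X - u *\<^sub>R (X - A X))"
    using lin by (intro linear_compose_sub linear_compose_scale_right linear_ident)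
  moreover have "inner (X - u *\<^sub>R (X - A X)) Y = inner X (Y - u *\<^sub>R (Y - A Y))" for X Y
    by (simp add: inner_diff_left inner_diff_right sym)
  moreover have "inner (X - u *\<^sub>R (X - A X)) X > 0" if "X \<noteq> 0" for X
  proof -
    have "inner (X - u *\<^sub>R (X - A X)) X = (1 - u) * inner X X + u * inner (A X) X"
      by (simp add: inner_diff_left algebra_simps)
    moreover have "(1 - u) * inner X X + u * inner (A X) X > 0"
    proof (cases "u = 0")
      case False
      then have "u * inner (A X) X > 0" using assms(2) pos[OF that] by simp
      moreover have "(1 - u) * inner X X \<ge> 0" using assms(3) by simp
      ultimately show ?thesis by linarith
    qed (use that in simp)
    ultimately show ?thesis by simp
  qed
  ultimately show ?thesis unfolding posdef_operator_def by blast
qed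

lemma left_inv_metric_posdef_operator:
  assumes "posdef_operator A"
  shows "left_inv_metric (\<lambda>X Y. inner (A X) Y)"
proof -
  have lin: "linear A" and sym: "\<And>X Y. inner (A X) Y = inner X (A Y)"
    and pos: "\<And>X. X \<noteq> 0 \<Longrightarrow> inner (A X) X > 0"
    using assms unfolding posdef_operator_def by auto
  have "bilinear (\<lambda>X Y. inner (A X) Y)"
    unfolding bilinear_def
    by (auto intro!: linearI simp: linear_add[OF lin] linear_cmul[OF lin] inner_add_left inner_add_right)
  moreover have "inner (A X) Y = inner (A Y) X" for X Y
    using sym[of X Y] by (simp add: inner_commute)
  ultimately show ?thesis
    unfolding left_inv_metric_def using pos by blast
qed

(* The Riesz representative of the functional g X, obtained from the adjoint of g X :: 'a => real. *)
definition metric_op :: "('a::euclidean_space \<Rightarrow> 'a \<Rightarrow> real) \<Rightarrow> 'a \<Rightarrow> 'a" where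
  "metric_op g X = adjoint (g X) 1"

lemma inner_metric_op:
  assumes "bilinear g"
  shows "inner (metric_op g X) Y = g X Y"
  using adjoint_works[of "g X" Y 1] assms
  by (simp add: metric_op_def bilinear_def inner_commute)

lemma left_inv_metric_cancel:
  assumes "left_inv_metric g" "\<And>Z. g U Z = g V Z"
  shows "U = V"
proof -
  have bil: "bilinear g" and pos: "\<And>X. X \<noteq> 0 \<Longrightarrow> g X X > 0"
    using assms(1) unfolding left_inv_metric_def by auto
  have "g (U - V) (U - V) = 0"
    using assms(2)[of "U - V"] by (simp add: bilinear_lsub[OF bil])
  then show ?thesis using pos[of "U - V"] by auto
qed

lemma linear_metric_op:
  assumes "bilinear g"
  shows "linear (metric_op g)"
proof (rule linearI)
  note G = inner_metric_op[OF assms]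
  show "metric_op g (X + Y) = metric_op g X + metric_op g Y" for X Y
    by (rule vector_eq_rdot[THEN iffD1]) (simp add: G inner_add_left bilinear_ladd[OF assms])
  show "metric_op g (a *\<^sub>R X) = a *\<^sub>R metric_op g X" for a X
    by (rule vector_eq_rdot[THEN iffD1]) (simp add: G bilinear_lmul[OF assms])
qed

lemma posdef_operator_metric_op:
  assumes "left_inv_metric g"
  shows "posdef_operator (metric_op g)"
proof -
  have bil: "bilinear g" and sym: "\<And>X Y. g X Y = g Y X" and pos: "\<And>X. X \<noteq> 0 \<Longrightarrow> g X X > 0"
    using assms unfolding left_inv_metric_def by auto
  note G = inner_metric_op[OF bil]
  have "inner (metric_op g X) Y = inner X (metric_op g Y)" for X Y
    using sym[of X Y] by (simp add: G inner_commute[of X])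
  moreover have "inner (metric_op g X) X > 0" if "X \<noteq> 0" for X
    using pos[OF that] by (simp add: G)
  ultimately show ?thesis unfolding posdef_operator_def using linear_metric_op[OF bil] by blast
qed

lemma left_inv_metric_represent:
  assumes "left_inv_metric g" "linear f"
  obtains V where "\<And>Z. g V Z = f Z"
proof
  let ?G = "metric_op g" and ?w = "adjoint f 1"
  have bil: "bilinear g" using assms(1) unfolding left_inv_metric_def by blast
  have "bij ?G" by (rule posdef_operator_bij[OF posdef_operator_metric_op[OF assms(1)]])
  then have G_inv: "?G (inv ?G ?w) = ?w" by (simp add: bij_is_surj surj_f_inv_f)
  fix Z
  have "g (inv ?G ?w) Z = inner Z ?w"
    by (simp add: inner_metric_op[OF bil, symmetric] G_inv inner_commute)
  also have "\<dots> = f Z" using adjoint_works[OF assms(2), of Z 1] by simp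
  finally show "g (inv ?G ?w) Z = f Z" .
qed

lemma endo_of_eqI:
  assumes "\<And>U V. (\<And>Y. b U Y = b V Y) \<Longrightarrow> U = V" "linear \<Phi>" "\<And>X Y. b (\<Phi> X) Y = h X Y"
  shows "endo_of b h = \<Phi>"
  unfolding endo_of_def
proof (rule the_equality)
  show "linear \<Phi> \<and> (\<forall>X Y. b (\<Phi> X) Y = h X Y)" using assms(2,3) by blast
  fix \<Phi>' assume "linear \<Phi>' \<and> (\<forall>X Y. b (\<Phi>' X) Y = h X Y)"
  then show "\<Phi>' = \<Phi>" by (intro ext assms(1)) (simp add: assms(3))
qed

lemma endo_of_scaled_inner:
  assumes "c \<noteq> 0" "bilinear h"
  shows "endo_of (\<lambda>X Y. c * inner X Y) h = (\<lambda>X. (1 / c) *\<^sub>R metric_op h X)"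
proof (rule endo_of_eqI)
  show "U = V" if "\<And>Y. c * inner U Y = c * inner V Y" for U V :: 'a
    using that assms(1) by (intro vector_eq_rdot[THEN iffD1]) simp
  show "linear (\<lambda>X. (1 / c) *\<^sub>R metric_op h X)"
    by (intro linear_compose_scale_right linear_metric_op assms(2))
  show "c * inner ((1 / c) *\<^sub>R metric_op h X) Y = h X Y" for X Y
    using assms by (simp add: inner_metric_op)
qed

lemma endo_of_inner:
  assumes "bilinear h"
  shows "endo_of inner h = metric_op h"
  using endo_of_scaled_inner[of 1, OF _ assms] by simp

lemma lc_nabla_eqI:
  assumes "left_inv_metric g" "\<And>Z. 2 * g V Z = g (br X Y) Z - g (br Y Z) X + g (br Z X) Y"
  shows "lc_nabla br g X Y = V"
  unfolding lc_nabla_def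
proof (rule the_equality)
  fix V' assume V': "\<forall>Z. 2 * g V' Z = g (br X Y) Z - g (br Y Z) X + g (br Z X) Y"
  show "V' = V"
  proof (rule left_inv_metric_cancel[OF assms(1)])
    show "g V' Z = g V Z" for Z using spec[OF V', of Z] assms(2)[of Z] by linarith
  qed
qed (use assms(2) in blast)

lemma lc_nabla_koszul:
  assumes "bilinear br" "left_inv_metric g"
  shows "2 * g (lc_nabla br g X Y) Z = g (br X Y) Z - g (br Y Z) X + g (br Z X) Y"
proof -
  have bil: "bilinear g" using assms(2) unfolding left_inv_metric_def by blast
  have g_left: "linear (\<lambda>W. g W U)" and g_right: "linear (g U)"
    and br_left: "linear (\<lambda>W. br W U)" and br_right: "linear (br U)" for U
    using assms(1) bil unfolding bilinear_def by auto
  have "linear (\<lambda>Z. g (br Y Z) X)" "linear (\<lambda>Z. g (br Z X) Y)"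
    using linear_compose[OF br_right g_left] linear_compose[OF br_left g_left] by (simp_all add: o_def)
  then have "linear (\<lambda>Z. g (br X Y) Z - g (br Y Z) X + g (br Z X) Y)"
    by (intro linear_compose_add linear_compose_sub g_right)
  then obtain V where V: "\<And>Z. g V Z = g (br X Y) Z - g (br Y Z) X + g (br Z X) Y"
    using left_inv_metric_represent[OF assms(2)] by blast
  have "lc_nabla br g X Y = (1 / 2) *\<^sub>R V"
    by (rule lc_nabla_eqI[OF assms(2)]) (simp add: bilinear_lmul[OF bil] V)
  then show ?thesis by (simp add: bilinear_lmul[OF bil] V)
qed

lemma lc_nabla_scaleR:
  assumes "bilinear br" "left_inv_metric g"
  shows "lc_nabla br g (a *\<^sub>R X) Y = a *\<^sub>R lc_nabla br g X Y"
    and "lc_nabla br g X (a *\<^sub>R Y) = a *\<^sub>R lc_nabla br g X Y"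
proof -
  have bil: "bilinear g" using assms(2) unfolding left_inv_metric_def by blast
  have K: "g (lc_nabla br g X Y) Z = (g (br X Y) Z - g (br Y Z) X + g (br Z X) Y) / 2" for Z
    using lc_nabla_koszul[OF assms, of X Y Z] by simp
  note lin = bilinear_lmul[OF bil] bilinear_rmul[OF bil] bilinear_lmul[OF assms(1)] bilinear_rmul[OF assms(1)]
  show "lc_nabla br g (a *\<^sub>R X) Y = a *\<^sub>R lc_nabla br g X Y"
    by (rule lc_nabla_eqI[OF assms(2)]) (simp add: K lin field_simps)
  show "lc_nabla br g X (a *\<^sub>R Y) = a *\<^sub>R lc_nabla br g X Y"
    by (rule lc_nabla_eqI[OF assms(2)]) (simp add: K lin field_simps)
qed

lemma sec_k_scaleR:
  assumes "bilinear br" "left_inv_metric g"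
  shows "sec_k br g (a *\<^sub>R X) (a *\<^sub>R Y) = a ^ 4 * sec_k br g X Y"
proof -
  have bil: "bilinear g" using assms(2) unfolding left_inv_metric_def by blast
  have "curv br g (a *\<^sub>R X) (a *\<^sub>R Y) (a *\<^sub>R Y) = (a * a * a) *\<^sub>R curv br g X Y Y"
    unfolding curv_def lc_nabla_scaleR[OF assms] bilinear_lmul[OF assms(1)] bilinear_rmul[OF assms(1)]
    by (simp add: algebra_simps)
  then show ?thesis
    unfolding sec_k_def by (simp add: bilinear_lmul[OF bil] bilinear_rmul[OF bil] power4_eq_xxxx)
qed

lemma sec_k_scale_metric:
  assumes "r \<noteq> 0"
  shows "sec_k br (\<lambda>X Y. r * g X Y) Z1 Z2 = r * sec_k br g Z1 Z2"
proof -
  have "(2 * (r * a) = r * b - r * c + r * d) \<longleftrightarrow> (2 * a = b - c + d)" for a b c d :: real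
    using assms by (metis (no_types, lifting) mult.left_commute mult_cancel_left
        right_diff_distrib distrib_left)
  then have "lc_nabla br (\<lambda>X Y. r * g X Y) = lc_nabla br g"
    unfolding lc_nabla_def by (simp only:)
  then show ?thesis unfolding sec_k_def curv_def by simp
qed

lemma posdef_operator_scaleR:
  assumes "posdef_operator A" "d > 0"
  shows "posdef_operator (\<lambda>X. d *\<^sub>R A X)"
proof -
  have "linear A" "\<And>X Y. inner (A X) Y = inner X (A Y)" "\<And>X. X \<noteq> 0 \<Longrightarrow> inner (A X) X > 0"
    using assms(1) unfolding posdef_operator_def by auto
  then show ?thesis
    unfolding posdef_operator_def using assms(2) by (simp add: linear_compose_scale_right)
qed

lemma inv_scaleR_linear:
  assumes "bij A" "linear A" "d \<noteq> 0"
  shows "inv (\<lambda>X. d *\<^sub>R A X) = (\<lambda>X. (1 / d) *\<^sub>R inv A X)"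
proof (rule inv_equality)
  show "(1 / d) *\<^sub>R inv A (d *\<^sub>R A X) = X" for X
    using assms by (simp add: linear_cmul[OF assms(2), symmetric] bij_is_inj)
  show "d *\<^sub>R A ((1 / d) *\<^sub>R inv A X) = X" for X
    using assms by (simp add: linear_cmul[OF assms(2)] bij_is_surj surj_f_inv_f)
qed

lemma posdef_operator_interp_inner:
  assumes "left_inv_metric h" "0 \<le> u" "u \<le> 1"
  shows "posdef_operator (\<lambda>X. X - u *\<^sub>R (X - inv (metric_op h) X))"
  using assms by (intro posdef_operator_convex posdef_operator_inv posdef_operator_metric_op)

lemma path_Phi_inner:
  assumes "left_inv_metric h"
  shows "path_Phi inner h u = inv (\<lambda>X. X - u *\<^sub>R (X - inv (metric_op h) X))"
  using assms unfolding left_inv_metric_def path_Phi_def by (simp add: endo_of_inner)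

lemma posdef_operator_path_Phi_inner:
  assumes "left_inv_metric h" "0 \<le> u" "u \<le> 1"
  shows "posdef_operator (path_Phi inner h u)"
  unfolding path_Phi_inner[OF assms(1)]
  by (intro posdef_operator_inv posdef_operator_interp_inner assms)

lemma inv_path_Phi_inner:
  assumes "left_inv_metric h" "0 \<le> u" "u \<le> 1"
  shows "inv (path_Phi inner h u) = (\<lambda>X. X - u *\<^sub>R (X - inv (metric_op h) X))"
  unfolding path_Phi_inner[OF assms(1)]
  by (intro inv_inv_eq posdef_operator_bij posdef_operator_interp_inner assms)

lemma left_inv_metric_path_metric_inner:
  assumes "left_inv_metric h" "0 \<le> u" "u \<le> 1"
  shows "left_inv_metric (path_metric inner h u)"
proof -
  have "path_metric inner h u = (\<lambda>X Y. inner (path_Phi inner h u X) Y)"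
    by (simp add: fun_eq_iff path_metric_def)
  then show ?thesis
    using left_inv_metric_posdef_operator[OF posdef_operator_path_Phi_inner[OF assms]] by simp
qed

lemma path_Phi_scaled_inner:
  assumes "c > 0" "left_inv_metric h" "0 \<le> t" "t \<le> 1"
  shows "path_Phi (\<lambda>X Y. c * inner X Y) h t
           = inv (\<lambda>X. (1 - t + c * t) *\<^sub>R inv (path_Phi inner h (reparam c t)) X)"
proof -
  define d where "d = 1 - t + c * t"
  define s where "s = reparam c t"
  let ?P = "inv (metric_op h)"
  have "d > 0" unfolding d_def using reparam_denom_pos assms by blast
  have s: "0 \<le> s" "s \<le> 1" unfolding s_def using reparam_bounds assms by auto
  have ds: "d * s = c * t" using \<open>d > 0\<close> by (simp add: s_def reparam_def d_def)
  have G: "bij (metric_op h)" "linear (metric_op h)"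
    using posdef_operator_bij posdef_operator_metric_op[OF assms(2)] posdef_operator_def by blast+
  have "bilinear h" using assms(2) unfolding left_inv_metric_def by blast
  then have "inv (endo_of (\<lambda>X Y. c * inner X Y) h) = (\<lambda>X. c *\<^sub>R ?P X)"
    using assms(1) inv_scaleR_linear[OF G, of "1 / c"] by (simp add: endo_of_scaled_inner)
  moreover have "X - t *\<^sub>R (X - c *\<^sub>R ?P X) = d *\<^sub>R (X - s *\<^sub>R (X - ?P X))" for X
  proof -
    have "d *\<^sub>R (X - s *\<^sub>R (X - ?P X)) = (d - d * s) *\<^sub>R X + (d * s) *\<^sub>R ?P X"
      by (simp add: algebra_simps)
    also have "\<dots> = (1 - t) *\<^sub>R X + (c * t) *\<^sub>R ?P X"
      unfolding ds by (simp add: d_def)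
    also have "\<dots> = X - t *\<^sub>R (X - c *\<^sub>R ?P X)"
      by (simp add: algebra_simps)
    finally show ?thesis by simp
  qed
  ultimately show ?thesis
    unfolding s_def[symmetric] d_def[symmetric] inv_path_Phi_inner[OF assms(2) s]
    unfolding path_Phi_def by simp
qed

lemma path_metric_scaled_inner:
  assumes "c > 0" "left_inv_metric h" "0 \<le> t" "t \<le> 1"
  shows "path_metric (\<lambda>X Y. c * inner X Y) h t
           = (\<lambda>X Y. c / (1 - t + c * t) * path_metric inner h (reparam c t) X Y)"
proof -
  define d where "d = 1 - t + c * t"
  define \<Phi> where "\<Phi> = path_Phi inner h (reparam c t)"
  have "d > 0" unfolding d_def using reparam_denom_pos assms by blast
  have "posdef_operator \<Phi>"
    unfolding \<Phi>_def by (rule posdef_operator_path_Phi_inner[OF assms(2) reparam_bounds[OF assms(1,3,4)]])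
  then have "bij (inv \<Phi>)" "linear (inv \<Phi>)" "bij \<Phi>"
    using posdef_operator_inv posdef_operator_bij posdef_operator_def by blast+
  then have "path_Phi (\<lambda>X Y. c * inner X Y) h t = (\<lambda>X. (1 / d) *\<^sub>R \<Phi> X)"
    using path_Phi_scaled_inner[OF assms] inv_scaleR_linear[of "inv \<Phi>" d] \<open>d > 0\<close>
    unfolding \<Phi>_def[symmetric] d_def[symmetric] by (simp add: inv_inv_eq)
  then show ?thesis
    unfolding d_def[symmetric] by (simp add: fun_eq_iff path_metric_def \<Phi>_def)
qed

lemma inv_path_Phi_scaled_inner:
  assumes "c > 0" "left_inv_metric h" "0 \<le> t" "t \<le> 1"
  shows "inv (path_Phi (\<lambda>X Y. c * inner X Y) h t)
           = (\<lambda>X. (1 - t + c * t) *\<^sub>R inv (path_Phi inner h (reparam c t)) X)"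
proof -
  have "posdef_operator (inv (path_Phi inner h (reparam c t)))"
    by (intro posdef_operator_inv posdef_operator_path_Phi_inner[OF assms(2) reparam_bounds[OF assms(1,3,4)]])
  then show ?thesis
    unfolding path_Phi_scaled_inner[OF assms] using reparam_denom_pos[of c t] assms
    by (intro inv_inv_eq posdef_operator_bij posdef_operator_scaleR) auto
qed

lemma path_kappa_scaled_inner:
  assumes "bilinear br" "c > 0" "left_inv_metric h" "0 \<le> t" "t \<le> 1"
  shows "path_kappa br (\<lambda>X Y. c * inner X Y) h X Y t
           = c * (1 - t + c * t) ^ 3 * path_kappa br inner h X Y (reparam c t)"
proof -
  define d where "d = 1 - t + c * t"
  define s where "s = reparam c t"
  have "d > 0" unfolding d_def using reparam_denom_pos assms by blast
  have "left_inv_metric (path_metric inner h s)"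
    unfolding s_def by (rule left_inv_metric_path_metric_inner[OF assms(3) reparam_bounds[OF assms(2,4,5)]])
  have "path_kappa br (\<lambda>X Y. c * inner X Y) h X Y t
      = sec_k br (\<lambda>X Y. c / d * path_metric inner h s X Y)
          (d *\<^sub>R inv (path_Phi inner h s) X) (d *\<^sub>R inv (path_Phi inner h s) Y)"
    unfolding path_kappa_def path_metric_scaled_inner[OF assms(2-5)]
      inv_path_Phi_scaled_inner[OF assms(2-5)] d_def[symmetric] s_def[symmetric] ..
  also have "\<dots> = c / d * sec_k br (path_metric inner h s)
          (d *\<^sub>R inv (path_Phi inner h s) X) (d *\<^sub>R inv (path_Phi inner h s) Y)"
    using \<open>d > 0\<close> assms(2) by (intro sec_k_scale_metric) simp
  also have "\<dots> = c / d * (d ^ 4 * path_kappa br inner h X Y s)"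
    unfolding sec_k_scaleR[OF assms(1) \<open>left_inv_metric (path_metric inner h s)\<close>] path_kappa_def ..
  also have "\<dots> = c * d ^ 3 * path_kappa br inner h X Y s"
    using \<open>d > 0\<close> by (simp add: field_simps eval_nat_numeral)
  finally show ?thesis unfolding d_def s_def .
qed

lemma path_nonneg_scaled_inner_iff:
  assumes "c > 0" "left_inv_metric h"
  shows "path_nonneg br (\<lambda>X Y. c * inner X Y) h \<longleftrightarrow> path_nonneg br inner h"
  unfolding path_nonneg_def
proof (rule reparam_all_iff[OF assms(1)])
  fix t :: real assume t: "0 \<le> t" "t \<le> 1"
  define r where "r = c / (1 - t + c * t)"
  have "r > 0" unfolding r_def using reparam_denom_pos[OF assms(1) t] assms(1) by simp
  then have "r \<noteq> 0" by simp
  show "(\<forall>Z1 Z2. 0 \<le> sec_k br (path_metric (\<lambda>X Y. c * inner X Y) h t) Z1 Z2)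
      \<longleftrightarrow> (\<forall>Z1 Z2. 0 \<le> sec_k br (path_metric inner h (reparam c t)) Z1 Z2)"
    unfolding path_metric_scaled_inner[OF assms t] r_def[symmetric] sec_k_scale_metric[OF \<open>r \<noteq> 0\<close>]
    using \<open>r > 0\<close> by (simp add: zero_le_mult_iff)
qed

lemma path_kappa_scaled_inner_nonneg_iff:
  assumes "bilinear br" "c > 0" "left_inv_metric h" "0 \<le> t" "t \<le> 1"
  shows "0 \<le> path_kappa br (\<lambda>X Y. c * inner X Y) h X Y t
           \<longleftrightarrow> 0 \<le> path_kappa br inner h X Y (reparam c t)"
proof -
  define r where "r = c * (1 - t + c * t) ^ 3"
  have "r > 0" unfolding r_def using reparam_denom_pos[OF assms(2,4,5)] assms(2) by simp
  then show ?thesis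
    unfolding path_kappa_scaled_inner[OF assms] r_def[symmetric] by (simp add: zero_le_mult_iff)
qed

lemma path_loc_nonneg_iff_holds_initially:
  "path_loc_nonneg br b h \<longleftrightarrow> holds_initially (\<lambda>t. \<forall>X Y. 0 \<le> path_kappa br b h X Y t)"
  unfolding path_loc_nonneg_def holds_initially_def by blast

lemma path_inf_nonneg_iff_holds_initially:
  "path_inf_nonneg br b h \<longleftrightarrow> (\<forall>X Y. holds_initially (\<lambda>t. 0 \<le> path_kappa br b h X Y t))"
  unfolding path_inf_nonneg_def holds_initially_def by simp

lemma path_loc_nonneg_scaled_inner_iff:
  assumes "bilinear br" "c > 0" "left_inv_metric h"
  shows "path_loc_nonneg br (\<lambda>X Y. c * inner X Y) h \<longleftrightarrow> path_loc_nonneg br inner h"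
  unfolding path_loc_nonneg_iff_holds_initially
  by (rule holds_initially_reparam_iff[OF assms(2)]) (simp add: path_kappa_scaled_inner_nonneg_iff[OF assms])

lemma path_inf_nonneg_scaled_inner_iff:
  assumes "bilinear br" "c > 0" "left_inv_metric h"
  shows "path_inf_nonneg br (\<lambda>X Y. c * inner X Y) h \<longleftrightarrow> path_inf_nonneg br inner h"
proof -
  have "holds_initially (\<lambda>t. 0 \<le> path_kappa br (\<lambda>X Y. c * inner X Y) h X Y t)
      \<longleftrightarrow> holds_initially (\<lambda>t. 0 \<le> path_kappa br inner h X Y t)" for X Y
    by (rule holds_initially_reparam_iff[OF assms(2)])
      (rule path_kappa_scaled_inner_nonneg_iff[OF assms])
  then show ?thesis unfolding path_inf_nonneg_iff_holds_initially by simp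
qed

theorem mainTheorem14:
  fixes br :: "'a::euclidean_space \<Rightarrow> 'a \<Rightarrow> 'a"
    and h :: "'a \<Rightarrow> 'a \<Rightarrow> real"
    and lam :: real
  assumes "compact_lie_algebra br"
    and "lam > 0"
    and "left_inv_metric h"
  shows "(path_nonneg br (\<lambda>X Y. inner X Y) h \<longleftrightarrow> path_nonneg br (\<lambda>X Y. lam * inner X Y) h)
       \<and> (path_loc_nonneg br (\<lambda>X Y. inner X Y) h \<longleftrightarrow> path_loc_nonneg br (\<lambda>X Y. lam * inner X Y) h)
       \<and> (path_inf_nonneg br (\<lambda>X Y. inner X Y) h \<longleftrightarrow> path_inf_nonneg br (\<lambda>X Y. lam * inner X Y) h)"
proof -
  have "bilinear br" using assms(1) unfolding compact_lie_algebra_def by blast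
  then show ?thesis
    using assms(2,3) by (simp add: path_nonneg_scaled_inner_iff path_loc_nonneg_scaled_inner_iff
        path_inf_nonneg_scaled_inner_iff)
qed

end
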